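(* Let $\mathcal{H}$ be a hypergraph. Then $\mathcal{H}$ is a hypertree if and only if $Comp(\mathcal{H})$ is a hypertree. Moreover, $\mathcal{H}$ is a hypertree if and only if $\mathcal{B}(Comp(\mathcal{H}))$ is a hypertree.
   Context: A hypergraph $\mathcal{H}$ has a finite vertex set $V(\mathcal{H})$ and a finite family $E(\mathcal{H})$ (repetitions allowed) of nonempty subsets of $V(\mathcal{H})$ (edges). A host tree of $\mathcal{H}$ is a tree with vertex set $V(\mathcal{H})$ in which every edge of $\mathcal{H}$ induces a connected subgraph; $\mathcal{H}$ is a hypertree if it has a host tree. A union $\bigcup_{i=1}^n F_i$ is connected if the intersection graph of the sets $F_1,\dots,F_n$ is connected. The completion $Comp(\mathcal{H})$ is the hypergraph without repeated edges on vertex set $V(\mathcal{H})$ whose edges are $V(\mathcal{H})$, all one-element subsets of $V(\mathcal{H})$, and all proper subsets of $V(\mathcal{H})$ obtainable from edges of $\mathcal{H}$ by applying (in any order and amount) nonempty intersections and connected unions. For a hypergraph $\mathcal{K}$ whose edge set is closed under connected unions, its basis $\mathcal{B}(\mathcal{K})$ is the hypergraph without repeated edges on $V(\mathcal{K})$ whose edges are the edges of $\mathcal{K}$ with more than one vertex that cannot be expressed as a connected union of strictly smaller edges of $\mathcal{K}$. *)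

theory Defs
  imports Main "HOL-Library.Multiset"
begin

definition graph_edges :: "'a set \<Rightarrow> 'a set set \<Rightarrow> bool" where
  "graph_edges V T \<longleftrightarrow> (\<forall>e\<in>T. \<exists>u v. e = {u, v} \<and> u \<noteq> v \<and> u \<in> V \<and> v \<in> V)"

definition adj_in :: "'a set set \<Rightarrow> 'a set \<Rightarrow> ('a \<times> 'a) set" where
  "adj_in T S = {(x, y). {x, y} \<in> T \<and> x \<in> S \<and> y \<in> S}"

definition induces_connected :: "'a set set \<Rightarrow> 'a set \<Rightarrow> bool" where
  "induces_connected T S \<longleftrightarrow> (\<forall>x\<in>S. \<forall>y\<in>S. (x, y) \<in> (adj_in T S)\<^sup>*)"

definition is_cycle :: "'a set set \<Rightarrow> 'a list \<Rightarrow> bool" where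
  "is_cycle T xs \<longleftrightarrow> length xs \<ge> 3 \<and> distinct xs \<and>
     (\<forall>i. Suc i < length xs \<longrightarrow> {xs ! i, xs ! Suc i} \<in> T) \<and>
     {last xs, hd xs} \<in> T"

definition is_tree :: "'a set \<Rightarrow> 'a set set \<Rightarrow> bool" where
  "is_tree V T \<longleftrightarrow> graph_edges V T \<and> induces_connected T V \<and>
     \<not> (\<exists>xs. is_cycle T xs)"

definition host_tree :: "'a set \<Rightarrow> 'a set set \<Rightarrow> 'a set set \<Rightarrow> bool" where
  "host_tree V Es T \<longleftrightarrow> is_tree V T \<and> (\<forall>F\<in>Es. induces_connected T F)"

definition is_hypertree :: "'a set \<Rightarrow> 'a set set \<Rightarrow> bool" where
  "is_hypertree V Es \<longleftrightarrow> (\<exists>T. host_tree V Es T)"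

definition hypergraph :: "'a set \<Rightarrow> 'a set multiset \<Rightarrow> bool" where
  "hypergraph V E \<longleftrightarrow> finite V \<and> (\<forall>F\<in>#E. F \<noteq> {} \<and> F \<subseteq> V)"

definition connected_family :: "'a set set \<Rightarrow> bool" where
  "connected_family S \<longleftrightarrow>
     (\<forall>A\<in>S. \<forall>B\<in>S. (A, B) \<in> {(X, Y). X \<in> S \<and> Y \<in> S \<and> X \<inter> Y \<noteq> {}}\<^sup>*)"

inductive_set comp_gen :: "'a set multiset \<Rightarrow> 'a set set" for E where
  base: "F \<in># E \<Longrightarrow> F \<in> comp_gen E"
| inter: "A \<in> comp_gen E \<Longrightarrow> B \<in> comp_gen E \<Longrightarrow> A \<inter> B \<noteq> {} \<Longrightarrow> A \<inter> B \<in> comp_gen E"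
| cunion: "finite S \<Longrightarrow> S \<noteq> {} \<Longrightarrow> (\<forall>A\<in>S. A \<in> comp_gen E) \<Longrightarrow> connected_family S
           \<Longrightarrow> \<Union>S \<in> comp_gen E"

text \<open>Edge set of the completion (no repeated edges, so a set).\<close>
definition Comp :: "'a set \<Rightarrow> 'a set multiset \<Rightarrow> 'a set set" where
  "Comp V E = {V} \<union> {{v} | v. v \<in> V} \<union> {X \<in> comp_gen E. X \<subset> V}"

definition basis :: "'a set set \<Rightarrow> 'a set set" where
  "basis K = {X \<in> K. card X > 1 \<and>
     \<not> (\<exists>S. finite S \<and> S \<noteq> {} \<and> S \<subseteq> {Y \<in> K. Y \<subset> X} \<and> connected_family S \<and> \<Union>S = X)}"

end

theory Submission
  imports Defs
begin

(* In a tree the vertex sets inducing connected subgraphs (subtrees) are closed under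
   connected unions and, since paths are unique, under nonempty intersections. Hence a
   host tree of H is a host tree of every set generated from the edges of H, i.e. of
   Comp(H); conversely Comp(H) contains every edge of H. For the basis, every edge of
   Comp(H) with more than one vertex is either a basis edge or a connected union of
   strictly smaller edges of Comp(H), so induction on the size of the edge shows that
   a host tree of the basis hosts all of Comp(H). *)

abbreviation walk :: "'a set set \<Rightarrow> 'a list \<Rightarrow> bool" where
  "walk T xs \<equiv> successively (\<lambda>a b. {a, b} \<in> T) xs"

lemma walk_if_rtrancl_adj_in:
  assumes "(x, y) \<in> (adj_in T S)\<^sup>*" "x \<in> S"
  shows "\<exists>xs. xs \<noteq> [] \<and> hd xs = x \<and> last xs = y \<and> set xs \<subseteq> S \<and> walk T xs"
  using assms(1)
proof (induction rule: rtrancl_induct)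
  case base
  show ?case using assms(2) by (intro exI[of _ "[x]"]) auto
next
  case (step y z)
  then obtain xs where "xs \<noteq> []" "hd xs = x" "last xs = y" "set xs \<subseteq> S" "walk T xs"
    by blast
  with step.hyps(2) show ?case
    by (intro exI[of _ "xs @ [z]"]) (auto simp: successively_append_iff adj_in_def)
qed

lemma rtrancl_adj_in_if_walk:
  assumes "walk T xs" "xs \<noteq> []" "set xs \<subseteq> S"
  shows "(hd xs, last xs) \<in> (adj_in T S)\<^sup>*"
  using assms
proof (induction xs)
  case Nil
  then show ?case by simp
next
  case (Cons a xs)
  show ?case
  proof (cases "xs = []")
    case True
    then show ?thesis by simp
  next
    case False
    have "(a, hd xs) \<in> adj_in T S"
      using Cons.prems False by (cases xs) (auto simp: adj_in_def)
    moreover have "(hd xs, last xs) \<in> (adj_in T S)\<^sup>*"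
      using Cons False by (auto simp: successively_Cons)
    ultimately show ?thesis
      using False by (auto intro: converse_rtrancl_into_rtrancl)
  qed
qed

lemma distinct_walk_if_walk:
  assumes "successively P xs" "xs \<noteq> []"
  shows "\<exists>ys. distinct ys \<and> ys \<noteq> [] \<and> hd ys = hd xs \<and> last ys = last xs
              \<and> set ys \<subseteq> set xs \<and> successively P ys"
  using assms
proof (induction xs rule: length_induct)
  case (1 xs)
  show ?case
  proof (cases "distinct xs")
    case True
    then show ?thesis using "1.prems" by blast
  next
    case False
    then obtain p m q z where xs: "xs = p @ [z] @ m @ [z] @ q"
      using not_distinct_decomp by blast
    define xs' where "xs' = p @ [z] @ q"
    have "successively P ((p @ [z] @ m) @ (z # q))"
      using "1.prems"(1) xs by simp
    then have "successively P (z # q)" and "successively P (p @ [z])"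
      by (metis append.assoc successively_append_iff)+
    then have "successively P xs'"
      unfolding xs'_def using successively_append_iff[of P "p @ [z]" q]
      by (cases q) (auto simp: successively_Cons)
    moreover have "length xs' < length xs" "xs' \<noteq> []"
      using xs xs'_def by simp_all
    ultimately obtain ys where "distinct ys \<and> ys \<noteq> [] \<and> hd ys = hd xs' \<and> last ys = last xs'
                                \<and> set ys \<subseteq> set xs' \<and> successively P ys"
      using "1.IH" by blast
    moreover have "hd xs' = hd xs" "last xs' = last xs" "set xs' \<subseteq> set xs"
      using xs xs'_def by (cases p; cases q; auto)+
    ultimately show ?thesis by auto
  qed
qed

lemma edge_is_bridge_if_acyclic:
  assumes acyclic: "\<not> (\<exists>xs. is_cycle T xs)" and edge: "{a, z} \<in> T" "a \<noteq> z"
  shows "(a, z) \<notin> (adj_in (T - {{a, z}}) UNIV)\<^sup>*"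
proof
  assume "(a, z) \<in> (adj_in (T - {{a, z}}) UNIV)\<^sup>*"
  from walk_if_rtrancl_adj_in[OF this UNIV_I]
  obtain xs where xs: "xs \<noteq> []" "hd xs = a" "last xs = z" "walk (T - {{a, z}}) xs"
    by blast
  obtain ys where ys: "distinct ys" "ys \<noteq> []" "hd ys = a" "last ys = z"
    "walk (T - {{a, z}}) ys"
    using distinct_walk_if_walk[OF xs(4,1)] xs(2,3) by auto
  have "length ys \<ge> 3"
  proof (rule ccontr)
    assume "\<not> 3 \<le> length ys"
    with ys(2) consider w where "ys = [w]" | w w' where "ys = [w, w']"
      by (cases ys; cases "tl ys") (auto simp: Suc_le_eq)
    then show False
      using ys(3-5) edge(2) by cases auto
  qed
  moreover have "walk T ys"
    using ys(5) by (rule successively_mono) auto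
  ultimately have "is_cycle T ys"
    unfolding is_cycle_def using ys edge(1) by (auto simp: successively_conv_nth insert_commute)
  with acyclic show False by blast
qed

text \<open>If some vertex w of the path lay outside B, the walk from x to y inside B would,
  together with the two halves of the path, join w to its predecessor on the path
  without using the edge between them.\<close>

lemma distinct_walk_subset_if_rtrancl_adj_in:
  assumes acyclic: "\<not> (\<exists>xs. is_cycle T xs)"
    and xs: "distinct xs" "xs \<noteq> []" "walk T xs" "hd xs = x" "last xs = y"
    and conn: "(x, y) \<in> (adj_in T B)\<^sup>*" and "x \<in> B"
  shows "set xs \<subseteq> B"
proof
  fix w assume "w \<in> set xs"
  show "w \<in> B"
  proof (rule ccontr)
    assume "w \<notin> B"
    obtain p r where split: "xs = p @ w # r"
      using split_list[OF \<open>w \<in> set xs\<close>] by blast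
    have "p \<noteq> []" using split xs(4) \<open>x \<in> B\<close> \<open>w \<notin> B\<close> by auto
    define a where "a = last p"
    define R where "R = adj_in (T - {{a, w}}) UNIV"
    have "a \<in> set p" using \<open>p \<noteq> []\<close> a_def by simp
    have disjoint: "set p \<inter> set (w # r) = {}" using xs(1) split by auto
    then have "a \<noteq> w" using \<open>a \<in> set p\<close> by auto
    have "walk T p" "walk T (w # r)" and edge: "{a, w} \<in> T"
      using xs(3) \<open>p \<noteq> []\<close> unfolding split a_def by (auto simp: successively_append_iff)
    then have walks: "walk (T - {{a, w}}) p" "walk (T - {{a, w}}) (w # r)"
      using disjoint \<open>a \<in> set p\<close> by (auto elim!: successively_mono simp: doubleton_eq_iff)
    have "(hd p, last p) \<in> R\<^sup>*" "(hd (w # r), last (w # r)) \<in> R\<^sup>*"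
      unfolding R_def using rtrancl_adj_in_if_walk[OF walks(1) \<open>p \<noteq> []\<close>]
        rtrancl_adj_in_if_walk[OF walks(2) list.discI] by simp_all
    then have "(x, a) \<in> R\<^sup>*" "(w, y) \<in> R\<^sup>*"
      using \<open>p \<noteq> []\<close> xs(4,5) split unfolding a_def by auto
    moreover have "(x, y) \<in> R\<^sup>*"
    proof -
      have "adj_in T B \<subseteq> R"
        unfolding R_def adj_in_def using \<open>w \<notin> B\<close> by (auto simp: doubleton_eq_iff)
      then show ?thesis using conn rtrancl_mono by blast
    qed
    moreover have "sym (R\<^sup>*)"
      unfolding R_def by (rule sym_rtrancl) (auto simp: sym_def adj_in_def insert_commute)
    ultimately have "(a, w) \<in> R\<^sup>*"
      by (meson rtrancl_trans symD)
    then show False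
      using edge_is_bridge_if_acyclic[OF acyclic edge \<open>a \<noteq> w\<close>] unfolding R_def by blast
  qed
qed

lemma induces_connected_Int:
  assumes acyclic: "\<not> (\<exists>xs. is_cycle T xs)"
    and A: "induces_connected T A" and B: "induces_connected T B"
  shows "induces_connected T (A \<inter> B)"
  unfolding induces_connected_def
proof (intro ballI)
  fix x y assume "x \<in> A \<inter> B" "y \<in> A \<inter> B"
  then have "(x, y) \<in> (adj_in T A)\<^sup>*" "(x, y) \<in> (adj_in T B)\<^sup>*"
    using A B unfolding induces_connected_def by auto
  obtain xs where xs: "xs \<noteq> []" "hd xs = x" "last xs = y" "set xs \<subseteq> A" "walk T xs"
    using walk_if_rtrancl_adj_in[OF \<open>(x, y) \<in> (adj_in T A)\<^sup>*\<close>] \<open>x \<in> A \<inter> B\<close> by blast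
  then obtain ys where ys: "distinct ys" "ys \<noteq> []" "hd ys = x" "last ys = y"
    "set ys \<subseteq> A" "walk T ys"
    using distinct_walk_if_walk[OF xs(5,1)] by auto
  have "set ys \<subseteq> B"
    using distinct_walk_subset_if_rtrancl_adj_in[OF acyclic ys(1,2,6,3,4)]
      \<open>(x, y) \<in> (adj_in T B)\<^sup>*\<close> \<open>x \<in> A \<inter> B\<close> by blast
  then show "(x, y) \<in> (adj_in T (A \<inter> B))\<^sup>*"
    using rtrancl_adj_in_if_walk[OF ys(6,2)] ys(3,4,5) by simp
qed

lemma rtrancl_adj_in_mono: "A \<subseteq> B \<Longrightarrow> (adj_in T A)\<^sup>* \<subseteq> (adj_in T B)\<^sup>*"
  by (rule rtrancl_mono) (auto simp: adj_in_def)

lemma induces_connected_Union: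
  assumes family: "connected_family S" and members: "\<forall>A\<in>S. induces_connected T A"
  shows "induces_connected T (\<Union>S)"
  unfolding induces_connected_def
proof (intro ballI)
  have conn_from: "\<forall>y\<in>Y. (x, y) \<in> (adj_in T (\<Union>S))\<^sup>*" if "x \<in> Y" "Y \<in> S" for x Y
    using members that rtrancl_adj_in_mono[of Y "\<Union>S" T]
    unfolding induces_connected_def by blast
  fix x y assume "x \<in> \<Union>S" "y \<in> \<Union>S"
  then obtain X Y where "X \<in> S" "x \<in> X" "Y \<in> S" "y \<in> Y" by blast
  have "(X, Y) \<in> {(X, Y). X \<in> S \<and> Y \<in> S \<and> X \<inter> Y \<noteq> {}}\<^sup>*"
    using family \<open>X \<in> S\<close> \<open>Y \<in> S\<close> unfolding connected_family_def by blast
  then have "\<forall>y\<in>Y. (x, y) \<in> (adj_in T (\<Union>S))\<^sup>*"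
  proof (induction rule: rtrancl_induct)
    case base
    show ?case using conn_from \<open>x \<in> X\<close> \<open>X \<in> S\<close> .
  next
    case (step Y Z)
    then obtain w where "w \<in> Y" "w \<in> Z" "Z \<in> S" by blast
    then show ?case using step.IH conn_from by (meson rtrancl_trans)
  qed
  then show "(x, y) \<in> (adj_in T (\<Union>S))\<^sup>*" using \<open>y \<in> Y\<close> by blast
qed

lemma induces_connected_if_card_le_1:
  assumes "finite X" "card X \<le> 1"
  shows "induces_connected T X"
  using assms by (auto simp: induces_connected_def card_le_Suc0_iff_eq)

lemma induces_connected_comp_gen:
  assumes "is_tree V T" "\<forall>F\<in>#E. induces_connected T F" "X \<in> comp_gen E"
  shows "induces_connected T X"
  using assms(3)
proof (induction rule: comp_gen.induct)
  case (base F)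
  then show ?case using assms(2) by blast
next
  case (inter A B)
  then show ?case using induces_connected_Int assms(1) unfolding is_tree_def by blast
next
  case (cunion S)
  then show ?case using induces_connected_Union by blast
qed

lemma host_tree_Comp_if_host_tree:
  assumes "host_tree V (set_mset E) T"
  shows "host_tree V (Comp V E) T"
proof -
  have tree: "is_tree V T" and edges: "\<forall>F\<in>#E. induces_connected T F"
    using assms unfolding host_tree_def by auto
  have "induces_connected T X" if X: "X \<in> Comp V E" for X
  proof -
    consider "X = V" | v where "X = {v}" | "X \<in> comp_gen E"
      using X unfolding Comp_def by blast
    then show ?thesis
    proof cases
      case 1
      then show ?thesis using tree unfolding is_tree_def by simp
    next
      case 2
      then show ?thesis by (simp add: induces_connected_if_card_le_1)
    next
      case 3
      then show ?thesis using induces_connected_comp_gen[OF tree edges] by blast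
    qed
  qed
  with tree show ?thesis unfolding host_tree_def by blast
qed

lemma induces_connected_if_basis_induces_connected:
  assumes "\<forall>B\<in>basis K. induces_connected T B" "finite X" "X \<in> K"
  shows "induces_connected T X"
  using assms(2,3)
proof (induction rule: finite_psubset_induct)
  case (psubset X)
  show ?case
  proof (cases "card X \<le> 1")
    case True
    then show ?thesis by (rule induces_connected_if_card_le_1[OF psubset.hyps(1)])
  next
    case False
    show ?thesis
    proof (cases "X \<in> basis K")
      case True
      then show ?thesis using assms(1) by blast
    next
      case not_basis: False
      obtain S where S: "S \<subseteq> {Y \<in> K. Y \<subset> X}" "connected_family S" "\<Union>S = X"
        using False not_basis psubset.prems unfolding basis_def by auto
      have "\<forall>A\<in>S. induces_connected T A"
        using S(1) psubset.IH by blast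
      then show ?thesis
        using induces_connected_Union[OF S(2)] S(3) by blast
    qed
  qed
qed

lemma host_tree_Comp_if_host_tree_basis:
  assumes "finite V" "host_tree V (basis (Comp V E)) T"
  shows "host_tree V (Comp V E) T"
proof -
  have "finite X" if "X \<in> Comp V E" for X
    using that assms(1) finite_subset unfolding Comp_def by auto
  then show ?thesis
    using assms(2) induces_connected_if_basis_induces_connected[of "Comp V E" T]
    unfolding host_tree_def by blast
qed

lemma is_hypertree_subset:
  "is_hypertree V Es \<Longrightarrow> Es' \<subseteq> Es \<Longrightarrow> is_hypertree V Es'"
  unfolding is_hypertree_def host_tree_def by blast

lemma set_mset_subset_Comp: "hypergraph V E \<Longrightarrow> set_mset E \<subseteq> Comp V E"
  unfolding Comp_def hypergraph_def by (auto intro: comp_gen.base)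

lemma basis_subset: "basis K \<subseteq> K"
  unfolding basis_def by auto

theorem mainTheorem2:
  fixes V :: "'a set" and E :: "'a set multiset"
  assumes "hypergraph V E"
  shows "(is_hypertree V (set_mset E) \<longleftrightarrow> is_hypertree V (Comp V E))
       \<and> (is_hypertree V (set_mset E) \<longleftrightarrow> is_hypertree V (basis (Comp V E)))"
proof -
  have "finite V" using assms unfolding hypergraph_def by blast
  have "is_hypertree V (set_mset E) \<longleftrightarrow> is_hypertree V (Comp V E)"
    using host_tree_Comp_if_host_tree is_hypertree_subset[OF _ set_mset_subset_Comp[OF assms]]
    unfolding is_hypertree_def by blast
  moreover have "is_hypertree V (Comp V E) \<longleftrightarrow> is_hypertree V (basis (Comp V E))"
    using host_tree_Comp_if_host_tree_basis[OF \<open>finite V\<close>] is_hypertree_subset[OF _ basis_subset]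
    unfolding is_hypertree_def by blast
  ultimately show ?thesis by blast
qed

end
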